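(* For $\lambda>0$ and $k\in\{0,1,2,\ldots\}$ let $p_k(\lambda)=\frac{\lambda^k}{k!}e^{-\lambda}$, and let $(q_k(\lambda))_{k\ge0}$ be the sequence $(p_k(\lambda))_{k\ge0}$ rearranged in non-increasing order (equal terms are kept with their multiplicities). Then for each $n\ge0$ the function $S_n(\lambda)=\sum_{k=0}^n q_k(\lambda)$ is strictly decreasing on $(0,+\infty)$.
   Context: $p_k(\lambda)$ are the probabilities of the Poisson distribution with parameter $\lambda$. Since $p_k(\lambda)\to0$ as $k\to\infty$, the non-increasing rearrangement $(q_k(\lambda))_{k\ge0}$ is well defined: $q_0(\lambda)\ge q_1(\lambda)\ge\cdots$ and $(q_k(\lambda))$ is a permutation of $(p_k(\lambda))$. *)

theory Defs
  imports Complex_Main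
begin

definition poisson_p :: "real \<Rightarrow> nat \<Rightarrow> real" where
  "poisson_p lam k = lam ^ k / fact k * exp (- lam)"

definition noninc_rearrangement :: "(nat \<Rightarrow> real) \<Rightarrow> (nat \<Rightarrow> real) \<Rightarrow> bool" where
  "noninc_rearrangement p q \<longleftrightarrow>
     (\<exists>\<sigma>. bij \<sigma> \<and> (\<forall>k. q k = p (\<sigma> k))) \<and> (\<forall>k. q (Suc k) \<le> q k)"

end

theory Submission
  imports Defs
begin

(* Since p_k' = p_(k-1) - p_k, the window sum F_m = p_m + ... + p_(m+n) has derivative
   p_(m-1) - p_(m+n), and p_(m+n) / p_(m-1) = lam^(n+1) / (m (m+1) ... (m+n)); so F_m strictly
   decreases once lam^(n+1) reaches the rising factorial m (m+1) ... (m+n).  As k |-> p_k(lam) is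
   unimodal, the n+1 largest values form a window: S_n = F_m for the m with
   m ... (m+n) <= lam^(n+1) < (m+1) ... (m+n+1), and S_n >= F_m' for every m'.  At a breakpoint
   lam^(n+1) = (m+1) ... (m+n+1) the windows m and m+1 have equal sums, so descending from b to a
   through the breakpoints, one window at a time, gives S_n(b) < S_n(a). *)

lemma sum_le_sum_top_set:
  fixes f :: "'a \<Rightarrow> 'b::linordered_idom"
  assumes "finite A" "finite W" "card A = card W"
    and "\<forall>k\<in>W. \<theta> \<le> f k" "\<forall>k. k \<notin> W \<longrightarrow> f k \<le> \<theta>"
  shows "sum f A \<le> sum f W"
proof -
  have "card (A - W) = card (W - A)"
    using assms(1-3) by (metis card_Diff_subset_Int finite_Int inf_commute)
  moreover have "sum f (A - W) \<le> of_nat (card (A - W)) * \<theta>"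
    using assms(5) sum_bounded_above[of "A - W" f \<theta>] by auto
  moreover have "of_nat (card (W - A)) * \<theta> \<le> sum f (W - A)"
    using assms(4) sum_bounded_below[of "W - A" \<theta> f] by auto
  moreover have "sum f A = sum f (A - W) + sum f (A \<inter> W)"
    "sum f W = sum f (W - A) + sum f (A \<inter> W)"
    using assms(1,2) by (metis add.commute inf_commute sum.Int_Diff)+
  ultimately show ?thesis by simp
qed

lemma noninc_rearrangement_sum_le:
  assumes "noninc_rearrangement p q" "finite W" "card W = Suc n"
  shows "sum p W \<le> (\<Sum>k\<le>n. q k)"
proof -
  obtain \<sigma> where "bij \<sigma>" and q: "\<And>k. q k = p (\<sigma> k)" and dec: "decseq q"
    using assms(1) unfolding noninc_rearrangement_def by (auto intro: decseq_SucI)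
  then have "inj \<sigma>" "surj \<sigma>" by (simp_all add: bij_is_inj bij_is_surj)
  define J where "J = \<sigma> -` W"
  have W: "W = \<sigma> ` J" unfolding J_def using \<open>surj \<sigma>\<close> by (simp add: surj_image_vimage_eq)
  have "finite J" unfolding J_def using assms(2) \<open>inj \<sigma>\<close> by (simp add: finite_vimageI)
  have "sum p W = sum q J"
    unfolding W q using \<open>inj \<sigma>\<close> by (simp add: sum.reindex inj_on_subset)
  also have "\<dots> \<le> sum q {..n}"
  proof (rule sum_le_sum_top_set[where \<theta> = "q n"])
    show "card J = card {..n}"
      using assms(3) card_image[of \<sigma> J] \<open>inj \<sigma>\<close> W by (simp add: inj_on_subset)
    show "\<forall>k\<in>{..n}. q n \<le> q k" "\<forall>k. k \<notin> {..n} \<longrightarrow> q k \<le> q n"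
      using dec by (auto simp: decseqD)
  qed (use \<open>finite J\<close> in simp_all)
  finally show ?thesis by simp
qed

lemma noninc_rearrangement_sum_eq_top_set:
  assumes "noninc_rearrangement p q" "finite W" "card W = Suc n"
    and "\<forall>k\<in>W. \<theta> \<le> p k" "\<forall>k. k \<notin> W \<longrightarrow> p k \<le> \<theta>"
  shows "(\<Sum>k\<le>n. q k) = sum p W"
proof -
  obtain \<sigma> where "bij \<sigma>" and q: "\<And>k. q k = p (\<sigma> k)"
    using assms(1) unfolding noninc_rearrangement_def by auto
  then have "inj \<sigma>" by (simp add: bij_is_inj)
  have "(\<Sum>k\<le>n. q k) = sum p (\<sigma> ` {..n})"
    unfolding q using \<open>inj \<sigma>\<close> by (simp add: sum.reindex inj_on_subset)
  also have "\<dots> \<le> sum p W"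
    using assms \<open>inj \<sigma>\<close> by (intro sum_le_sum_top_set) (auto simp: card_image inj_on_subset)
  finally show ?thesis
    using noninc_rearrangement_sum_le[OF assms(1-3)] by simp
qed

lemma power_le_pochhammer:
  fixes a :: "'a::linordered_semidom"
  assumes "0 \<le> a"
  shows "a ^ n \<le> pochhammer a n"
proof -
  have "(\<Prod>i\<in>{0..<n}. a) \<le> (\<Prod>i\<in>{0..<n}. a + of_nat i)"
    using assms by (intro prod_mono) auto
  then show ?thesis by (simp add: pochhammer_prod)
qed

lemma pochhammer_le_power:
  fixes a :: "'a::linordered_idom"
  assumes "0 \<le> a"
  shows "pochhammer a n \<le> (a + of_nat n - 1) ^ n"
proof -
  have "(\<Prod>i\<in>{0..<n}. a + of_nat i) \<le> (\<Prod>i\<in>{0..<n}. a + of_nat n - 1)"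
    using assms
    by (intro prod_mono) (auto simp: le_diff_eq, metis Suc_leI of_nat_Suc of_nat_mono add.commute)
  then show ?thesis by (simp add: pochhammer_prod)
qed

lemma pochhammer_mono:
  fixes a :: "'a::linordered_semidom"
  assumes "0 \<le> a" "a \<le> b"
  shows "pochhammer a n \<le> pochhammer b n"
  unfolding pochhammer_prod using assms by (intro prod_mono) auto

lemma poisson_p_pos: "0 < x \<Longrightarrow> 0 < poisson_p x k"
  unfolding poisson_p_def by simp

lemma poisson_p_Suc: "poisson_p x (Suc k) = poisson_p x k * x / real (Suc k)"
  unfolding poisson_p_def by (simp add: field_simps)

lemma poisson_p_add_mult_pochhammer:
  "poisson_p x (j + l) * pochhammer (real j + 1) l = poisson_p x j * x ^ l"
proof (induction l)
  case (Suc l)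
  have "poisson_p x (j + Suc l) * pochhammer (real j + 1) (Suc l)
      = poisson_p x (j + l) * pochhammer (real j + 1) l * x"
    by (simp add: poisson_p_Suc pochhammer_Suc field_simps)
  then show ?case using Suc.IH by simp
qed simp

lemma poisson_p_add:
  "poisson_p x (j + l) = poisson_p x j * x ^ l / pochhammer (real j + 1) l"
  using poisson_p_add_mult_pochhammer[of x j l] pochhammer_pos[of "real j + 1" l]
  by (simp add: field_simps)

lemma poisson_p_le_add_iff:
  assumes "0 < x"
  shows "poisson_p x j \<le> poisson_p x (j + l) \<longleftrightarrow> pochhammer (real j + 1) l \<le> x ^ l"
  using poisson_p_pos[OF assms, of j] pochhammer_pos[of "real j + 1" l]
  by (simp add: poisson_p_add pos_le_divide_eq)

lemma poisson_p_less_add_iff: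
  assumes "0 < x"
  shows "poisson_p x j < poisson_p x (j + l) \<longleftrightarrow> pochhammer (real j + 1) l < x ^ l"
  using poisson_p_pos[OF assms, of j] pochhammer_pos[of "real j + 1" l]
  by (simp add: poisson_p_add pos_less_divide_eq)

lemma poisson_p_mono:
  assumes "0 < x" "i \<le> k" "real k \<le> x"
  shows "poisson_p x i \<le> poisson_p x k"
proof -
  obtain l where k: "k = i + l" using le_Suc_ex[OF assms(2)] by blast
  have "pochhammer (real i + 1) l \<le> real k ^ l"
    using pochhammer_le_power[of "real i + 1" l] by (simp add: k add_ac)
  also have "\<dots> \<le> x ^ l"
    using assms(3) by (intro power_mono) auto
  finally show ?thesis
    using poisson_p_le_add_iff[OF assms(1)] k by simp
qed

lemma poisson_p_antimono:
  assumes "0 < x" "x \<le> real i + 1" "i \<le> k"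
  shows "poisson_p x k \<le> poisson_p x i"
proof -
  obtain l where k: "k = i + l" using le_Suc_ex[OF assms(3)] by blast
  have "x ^ l \<le> (real i + 1) ^ l"
    using assms(1,2) by (intro power_mono) auto
  also have "\<dots> \<le> pochhammer (real i + 1) l"
    by (rule power_le_pochhammer) simp
  finally show ?thesis
    using poisson_p_less_add_iff[OF assms(1), of i l] k by simp
qed

lemma poisson_p_deriv:
  "((\<lambda>x. poisson_p x k) has_real_derivative
     (if k = 0 then 0 else poisson_p x (k - 1)) - poisson_p x k) (at x)"
proof -
  have "((\<lambda>x. x ^ k * exp (- x) / fact k) has_real_derivative
      (real k * x ^ (k - 1) * exp (- x) - x ^ k * exp (- x)) / fact k) (at x)"
    by (rule DERIV_cdivide) (auto intro!: derivative_eq_intros)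
  moreover have "(real k * x ^ (k - 1) * exp (- x) - x ^ k * exp (- x)) / fact k
      = (if k = 0 then 0 else poisson_p x (k - 1)) - poisson_p x k"
    by (cases k) (simp_all add: poisson_p_def field_simps del: of_nat_Suc)
  ultimately show ?thesis
    by (simp add: poisson_p_def)
qed

definition poisson_window :: "nat \<Rightarrow> nat \<Rightarrow> real \<Rightarrow> real" where
  "poisson_window n m x = (\<Sum>k=m..m+n. poisson_p x k)"

lemma poisson_window_deriv:
  "(poisson_window n m has_real_derivative
     (if m = 0 then 0 else poisson_p x (m - 1)) - poisson_p x (m + n)) (at x)"
proof -
  let ?g = "\<lambda>k. if k = 0 then 0 else poisson_p x (k - 1)"
  have "(poisson_window n m has_real_derivative (\<Sum>k=m..m+n. ?g k - ?g (Suc k))) (at x)"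
    unfolding poisson_window_def[abs_def] by (auto intro!: DERIV_sum poisson_p_deriv)
  also have "(\<Sum>k=m..m+n. ?g k - ?g (Suc k)) = ?g m - ?g (Suc (m + n))"
    using sum_Suc_diff[of m "m + n" "\<lambda>k. - ?g k"] by simp
  finally show ?thesis by simp
qed

lemma poisson_window_strict_antimono:
  assumes "0 \<le> x" "x < y" "pochhammer (real m) (Suc n) \<le> x ^ Suc n"
  shows "poisson_window n m y < poisson_window n m x"
proof (rule DERIV_neg_imp_decreasing_open[OF assms(2)])
  show "continuous_on {x..y} (poisson_window n m)"
    using poisson_window_deriv
    by (intro DERIV_atLeastAtMost_imp_continuous_on) blast
  fix z assume z: "x < z" "z < y"
  then have "0 < z" using assms(1) by linarith
  have "pochhammer (real m) (Suc n) < z ^ Suc n"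
    using assms(1,3) z power_strict_mono[of x z "Suc n"] by linarith
  then have "(if m = 0 then 0 else poisson_p z (m - 1)) < poisson_p z (m + n)"
    using poisson_p_pos[OF \<open>0 < z\<close>] poisson_p_less_add_iff[OF \<open>0 < z\<close>, of "m - 1" "Suc n"]
    by (cases m) (simp_all add: add_ac)
  then show "\<exists>d. (poisson_window n m has_real_derivative d) (at z) \<and> d < 0"
    using poisson_window_deriv by fastforce
qed

lemma poisson_window_Suc_eq:
  assumes "t ^ Suc n = pochhammer (real (Suc m)) (Suc n)"
  shows "poisson_window n (Suc m) t = poisson_window n m t"
proof -
  have "pochhammer (real (Suc m)) (Suc n) \<noteq> 0"
    using pochhammer_pos[of "real (Suc m)" "Suc n"] by simp
  then have "poisson_p t (Suc (m + n)) = poisson_p t m"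
    using poisson_p_add_mult_pochhammer[of t m "Suc n"] assms by (simp add: add_ac)
  moreover have "(\<Sum>k=m..Suc (m + n). poisson_p t k) = poisson_window n m t + poisson_p t (Suc (m + n))"
    "(\<Sum>k=m..Suc (m + n). poisson_p t k) = poisson_p t m + poisson_window n (Suc m) t"
    by (simp_all add: poisson_window_def sum.atLeast_Suc_atMost)
  ultimately show ?thesis by simp
qed

lemma poisson_window_top_set:
  assumes "0 < x" "pochhammer (real m) (Suc n) \<le> x ^ Suc n"
    and "x ^ Suc n < pochhammer (real (Suc m)) (Suc n)"
  defines "\<theta> \<equiv> min (poisson_p x m) (poisson_p x (m + n))"
  shows "\<forall>k\<in>{m..m+n}. \<theta> \<le> poisson_p x k" "\<forall>k. k \<notin> {m..m+n} \<longrightarrow> poisson_p x k \<le> \<theta>"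
proof -
  have "real m ^ Suc n \<le> x ^ Suc n"
    using power_le_pochhammer[of "real m" "Suc n"] assms(2) by linarith
  then have "real m \<le> x"
    using assms(1) by (meson less_imp_le power_le_imp_le_base)
  have "pochhammer (real (Suc m)) (Suc n) \<le> (real (m + n) + 1) ^ Suc n"
    using pochhammer_le_power[of "real (Suc m)" "Suc n"] by (simp add: add_ac)
  then have "x ^ Suc n < (real (m + n) + 1) ^ Suc n"
    using assms(3) by linarith
  then have "x \<le> real (m + n) + 1"
    using power_less_imp_less_base[of x "Suc n"] by fastforce
  show "\<forall>k\<in>{m..m+n}. \<theta> \<le> poisson_p x k"
  proof
    fix k assume k: "k \<in> {m..m+n}"
    show "\<theta> \<le> poisson_p x k"
    proof (cases "real k \<le> x")
      case True
      then show ?thesis using poisson_p_mono[OF assms(1), of m k] k unfolding \<theta>_def by simp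
    next
      case False
      then show ?thesis using poisson_p_antimono[OF assms(1), of k "m + n"] k unfolding \<theta>_def by simp
    qed
  qed
  show "\<forall>k. k \<notin> {m..m+n} \<longrightarrow> poisson_p x k \<le> \<theta>"
  proof (intro allI impI)
    fix k assume "k \<notin> {m..m+n}"
    then consider "k < m" | "m + n < k" by force
    then show "poisson_p x k \<le> \<theta>"
    proof cases
      case 1
      then obtain j where m: "m = Suc j" and "k \<le> j" by (cases m) auto
      have "poisson_p x j \<le> poisson_p x (j + Suc n)"
        using poisson_p_le_add_iff[OF assms(1), of j "Suc n"] assms(2) m by (simp add: add_ac)
      moreover have "poisson_p x k \<le> poisson_p x j" "poisson_p x k \<le> poisson_p x m"
        using poisson_p_mono[OF assms(1)] \<open>real m \<le> x\<close> \<open>k \<le> j\<close> m by simp_all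
      ultimately show ?thesis unfolding \<theta>_def m by simp
    next
      case 2
      have "poisson_p x (m + Suc n) < poisson_p x m"
        using poisson_p_le_add_iff[OF assms(1), of m "Suc n"] assms(3) by (simp add: add_ac)
      moreover have "poisson_p x k \<le> poisson_p x (m + Suc n)" "poisson_p x k \<le> poisson_p x (m + n)"
        using poisson_p_antimono[OF assms(1)] \<open>x \<le> real (m + n) + 1\<close> 2 by simp_all
      ultimately show ?thesis unfolding \<theta>_def by simp
    qed
  qed
qed

lemma pochhammer_bracket_exists:
  fixes x :: real
  assumes "0 < x"
  obtains m where "pochhammer (real m) (Suc n) \<le> x ^ Suc n"
    and "x ^ Suc n < pochhammer (real (Suc m)) (Suc n)"
proof -
  obtain N :: nat where "x < real N" using reals_Archimedean2 by blast
  then have "x ^ Suc n < real N ^ Suc n"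
    using assms by (intro power_strict_mono) auto
  also have "\<dots> \<le> pochhammer (real N) (Suc n)"
    by (rule power_le_pochhammer) simp
  finally have "x ^ Suc n < pochhammer (real N) (Suc n)" .
  moreover have "\<not> x ^ Suc n < pochhammer (real 0) (Suc n)"
    using assms by (simp add: pochhammer_0_left not_less del: power_Suc)
  ultimately obtain m where "\<not> x ^ Suc n < pochhammer (real m) (Suc n)"
    and "x ^ Suc n < pochhammer (real (Suc m)) (Suc n)"
    using ex_least_nat_less[of "\<lambda>k. x ^ Suc n < pochhammer (real k) (Suc n)" N] by blast
  then show ?thesis using that by (metis not_less)
qed

lemma poisson_window_le_top_sum:
  assumes "noninc_rearrangement (poisson_p x) q"
  shows "poisson_window n m x \<le> (\<Sum>k\<le>n. q k)"
  unfolding poisson_window_def by (rule noninc_rearrangement_sum_le[OF assms]) simp_all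

lemma top_sum_eq_poisson_window:
  assumes "noninc_rearrangement (poisson_p x) q" "0 < x"
    and "pochhammer (real m) (Suc n) \<le> x ^ Suc n" "x ^ Suc n < pochhammer (real (Suc m)) (Suc n)"
  shows "(\<Sum>k\<le>n. q k) = poisson_window n m x"
  unfolding poisson_window_def
  using noninc_rearrangement_sum_eq_top_set[OF assms(1) _ _ poisson_window_top_set[OF assms(2-4)]]
  by simp

lemma poisson_window_descent:
  assumes "0 < a" "a < c" "pochhammer (real m) (Suc n) \<le> c ^ Suc n"
  shows "\<exists>m'. poisson_window n m c < poisson_window n m' a"
  using assms(2,3)
proof (induction m arbitrary: c)
  case 0
  then show ?case
    using assms(1) poisson_window_strict_antimono[of a c 0 n] by (auto simp: pochhammer_0_left)
next
  case (Suc m)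
  show ?case
  proof (cases "pochhammer (real (Suc m)) (Suc n) \<le> a ^ Suc n")
    case True
    then show ?thesis
      using assms(1) Suc.prems poisson_window_strict_antimono[of a c "Suc m" n] by auto
  next
    case False
    \<comment> \<open>the breakpoint at which the top window moves from \<open>m\<close> to \<open>Suc m\<close>\<close>
    define t where "t = root (Suc n) (pochhammer (real (Suc m)) (Suc n))"
    have "0 < pochhammer (real (Suc m)) (Suc n)" by (rule pochhammer_pos) simp
    then have "0 < t" and t: "t ^ Suc n = pochhammer (real (Suc m)) (Suc n)"
      unfolding t_def by (simp, intro real_root_pow_pos2) simp_all
    have "a < t"
      using False t \<open>0 < t\<close> by (metis not_le power_less_imp_less_base less_imp_le)
    have "t \<le> c"
      using t Suc.prems \<open>0 < a\<close> by (metis power_le_imp_le_base less_imp_le order.strict_trans)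
    have "poisson_window n (Suc m) c \<le> poisson_window n (Suc m) t"
      using poisson_window_strict_antimono[of t c "Suc m" n] \<open>0 < t\<close> t \<open>t \<le> c\<close>
      by (cases "t = c") auto
    also have "\<dots> = poisson_window n m t"
      by (rule poisson_window_Suc_eq[OF t])
    finally have "poisson_window n (Suc m) c \<le> poisson_window n m t" .
    moreover have "pochhammer (real m) (Suc n) \<le> t ^ Suc n"
      using t pochhammer_mono[of "real m" "real (Suc m)" "Suc n"] by simp
    then obtain m' where "poisson_window n m t < poisson_window n m' a"
      using Suc.IH \<open>a < t\<close> by blast
    ultimately show ?thesis by (meson le_less_trans)
  qed
qed

theorem lemma1:
  fixes q :: "real \<Rightarrow> nat \<Rightarrow> real" and n :: nat
  assumes "\<And>lam. lam > 0 \<Longrightarrow> noninc_rearrangement (poisson_p lam) (q lam)"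
  shows "\<forall>a b. 0 < a \<and> a < b \<longrightarrow> (\<Sum>k\<le>n. q b k) < (\<Sum>k\<le>n. q a k)"
proof (intro allI impI)
  fix a b :: real assume ab: "0 < a \<and> a < b"
  then have "0 < b" by simp
  then obtain m where m: "pochhammer (real m) (Suc n) \<le> b ^ Suc n"
    "b ^ Suc n < pochhammer (real (Suc m)) (Suc n)"
    using pochhammer_bracket_exists by blast
  then have "(\<Sum>k\<le>n. q b k) = poisson_window n m b"
    using top_sum_eq_poisson_window assms \<open>0 < b\<close> by blast
  moreover obtain m' where "poisson_window n m b < poisson_window n m' a"
    using poisson_window_descent ab m(1) by blast
  moreover have "poisson_window n m' a \<le> (\<Sum>k\<le>n. q a k)"
    using poisson_window_le_top_sum assms ab by blast
  ultimately show "(\<Sum>k\<le>n. q b k) < (\<Sum>k\<le>n. q a k)" by simp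
qed

end
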